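(* Let $R$ be an integral domain and $\mathfrak p$ a prime ideal of $R$ such that $\widehat{R}_{\mathfrak p}$ is an integral domain containing $R$ (via the canonical map). Let $f\in R[[X]]$ be $\widehat{\mathfrak p}$-distinguished in $\widehat{R}_{\mathfrak p}[[X]]$. Suppose that $\widehat{R}_{\mathfrak p}/f_0\widehat{R}_{\mathfrak p}\cong R/f_0R$ as $R$-algebras and that every divisor of $f_0$ in $\widehat{R}_{\mathfrak p}$ is associate in $\widehat{R}_{\mathfrak p}$ to a divisor of $f_0$ in $R$. Then $f$ is irreducible in $R[[X]]$ if and only if the Weierstrass polynomial $P_f$ associated to $f$ in $\widehat{R}_{\mathfrak p}[X]$ is irreducible in $\widehat{R}_{\mathfrak p}[X]$. More precisely: (1) if $f=gh$ with nonunits $g,h\in R[[X]]$, then $g$ and $h$ are $\widehat{\mathfrak p}$-distinguished in $\widehat{R}_{\mathfrak p}[[X]]$, $P_f=P_gP_h$, and $P_g,P_h$ are nonunits in $\widehat{R}_{\mathfrak p}[X]$; (2) if $P_f=GH$ with nonunits $G,H\in\widehat{R}_{\mathfrak p}[X]$, then $f=gh$ for some nonunits $g,h\in R[[X]]$ with $G=uP_g$ and $H=u^{-1}P_h$ for a unique unit $u\in\widehat{R}_{\mathfrak p}$.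
   Context: $\widehat{R}_{\mathfrak p}=\varprojlim R/\mathfrak p^n$ is the $\mathfrak p$-adic completion and $\widehat{\mathfrak p}$ the closure of the image of $\mathfrak p$ in it; $\widehat{R}_{\mathfrak p}$ is complete with respect to the filtration by closures of powers of $\mathfrak p$. A series $g\in S[[X]]$ is $\mathfrak b$-distinguished of order $n$ if its coefficients $g_i$ lie in $\mathfrak b$ for $i<n$ and $g_n$ is a unit mod $\mathfrak b$; for a $\widehat{\mathfrak p}$-distinguished $g$, $P_g$ is the unique monic polynomial in $\widehat{R}_{\mathfrak p}[X]$ with non-leading coefficients in $\widehat{\mathfrak p}$ such that $g=UP_g$ for some unit $U\in\widehat{R}_{\mathfrak p}[[X]]$. $f_0$ is the constant term of $f$. *)

theory Defs
  imports "HOL-Computational_Algebra.Computational_Algebra"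
    "HOL-Computational_Algebra.Polynomial_FPS"
begin

definition is_ideal :: "'a::comm_ring_1 set \<Rightarrow> bool" where
  "is_ideal I \<longleftrightarrow> 0 \<in> I \<and> (\<forall>x\<in>I. \<forall>y\<in>I. x + y \<in> I) \<and> (\<forall>x\<in>I. - x \<in> I)
                 \<and> (\<forall>x\<in>I. \<forall>r. r * x \<in> I)"

definition is_prime_ideal :: "'a::comm_ring_1 set \<Rightarrow> bool" where
  "is_prime_ideal P \<longleftrightarrow> is_ideal P \<and> P \<noteq> UNIV \<and> (\<forall>a b. a * b \<in> P \<longrightarrow> a \<in> P \<or> b \<in> P)"

definition ideal_gen :: "'a::comm_ring_1 set \<Rightarrow> 'a set" where
  "ideal_gen S = \<Inter>{I. is_ideal I \<and> S \<subseteq> I}"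

fun ideal_pow :: "'a::comm_ring_1 set \<Rightarrow> nat \<Rightarrow> 'a set" where
  "ideal_pow P 0 = UNIV"
| "ideal_pow P (Suc n) = ideal_gen {a * b | a b. a \<in> P \<and> b \<in> ideal_pow P n}"

definition coset :: "'a::comm_ring_1 set \<Rightarrow> 'a \<Rightarrow> 'a set" where
  "coset I a = {a + x | x. x \<in> I}"

text \<open>Elements of lim R/p^n: compatible families of classes x n in R/p^n.
  Compatibility (x (n+1) maps to x n) is exactly x (Suc n) \<subseteq> x n.\<close>
definition invlim :: "'a::comm_ring_1 set \<Rightarrow> (nat \<Rightarrow> 'a set) set" where
  "invlim P = {x. (\<forall>n. \<exists>a. x n = coset (ideal_pow P n) a) \<and> (\<forall>n. x (Suc n) \<subseteq> x n)}"

text \<open>\<open>is_padic_completion P \<iota> \<phi>\<close>: the ring 'b together with the map \<iota> : R \<rightarrow> 'b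
  is (a copy of) the P-adic completion lim R/P^n with its canonical map;
  \<phi> is a ring isomorphism from 'b onto the inverse limit (with componentwise
  ring operations) such that \<phi> (\<iota> a) is the family of classes of a.\<close>
definition is_padic_completion ::
  "'a::comm_ring_1 set \<Rightarrow> ('a \<Rightarrow> 'b::comm_ring_1) \<Rightarrow> ('b \<Rightarrow> nat \<Rightarrow> 'a set) \<Rightarrow> bool" where
  "is_padic_completion P \<iota> \<phi> \<longleftrightarrow>
     bij_betw \<phi> UNIV (invlim P) \<and>
     (\<forall>x y n a b. \<phi> x n = coset (ideal_pow P n) a \<longrightarrow> \<phi> y n = coset (ideal_pow P n) b \<longrightarrow>
          \<phi> (x + y) n = coset (ideal_pow P n) (a + b) \<and>
          \<phi> (x * y) n = coset (ideal_pow P n) (a * b)) \<and>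
     (\<forall>a n. \<phi> (\<iota> a) n = coset (ideal_pow P n) a)"

text \<open>Closure of a subset A of the completion in the inverse-limit (p-adic)
  topology, whose basic neighbourhoods of x are {y. \<phi> y n = \<phi> x n}.\<close>
definition padic_closure :: "('b \<Rightarrow> nat \<Rightarrow> 'a set) \<Rightarrow> 'b set \<Rightarrow> 'b set" where
  "padic_closure \<phi> A = {x. \<forall>n. \<exists>y\<in>A. \<phi> y n = \<phi> x n}"

definition fps_map :: "('a::zero \<Rightarrow> 'b::zero) \<Rightarrow> 'a fps \<Rightarrow> 'b fps" where
  "fps_map \<iota> f = Abs_fps (\<lambda>n. \<iota> (fps_nth f n))"

definition distinguished_of_order :: "'b::comm_ring_1 set \<Rightarrow> nat \<Rightarrow> 'b fps \<Rightarrow> bool" where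
  "distinguished_of_order B n g \<longleftrightarrow>
     (\<forall>i<n. fps_nth g i \<in> B) \<and> (\<exists>c. fps_nth g n * c - 1 \<in> B)"

definition distinguished :: "'b::comm_ring_1 set \<Rightarrow> 'b fps \<Rightarrow> bool" where
  "distinguished B g \<longleftrightarrow> (\<exists>n. distinguished_of_order B n g)"

definition weierstrass_poly :: "'b::comm_ring_1 set \<Rightarrow> 'b fps \<Rightarrow> 'b poly" where
  "weierstrass_poly B g = (THE P. lead_coeff P = 1 \<and> (\<forall>i<degree P. coeff P i \<in> B) \<and>
                                   (\<exists>U. U dvd 1 \<and> g = U * fps_of_poly P))"

definition principal :: "'a::comm_ring_1 \<Rightarrow> 'a set" where
  "principal a = {a * r | r. True}"

text \<open>\<psi> maps classes of R/f0 R to classes of S/\<iota>(f0) S; it is a bijection,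
  additive, multiplicative, and compatible with the structure maps R \<rightarrow> R/f0R and
  R \<rightarrow> S/\<iota>(f0)S (hence unital): an isomorphism of R-algebras.\<close>
definition quot_R_alg_iso ::
  "('a::comm_ring_1 \<Rightarrow> 'b::comm_ring_1) \<Rightarrow> 'a \<Rightarrow> ('a set \<Rightarrow> 'b set) \<Rightarrow> bool" where
  "quot_R_alg_iso \<iota> f0 \<psi> \<longleftrightarrow>
     bij_betw \<psi> (range (coset (principal f0))) (range (coset (principal (\<iota> f0)))) \<and>
     (\<forall>a b x y. \<psi> (coset (principal f0) a) = coset (principal (\<iota> f0)) x \<longrightarrow>
                \<psi> (coset (principal f0) b) = coset (principal (\<iota> f0)) y \<longrightarrow>
                \<psi> (coset (principal f0) (a + b)) = coset (principal (\<iota> f0)) (x + y) \<and>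
                \<psi> (coset (principal f0) (a * b)) = coset (principal (\<iota> f0)) (x * y)) \<and>
     (\<forall>r. \<psi> (coset (principal f0) r) = coset (principal (\<iota> f0)) (\<iota> r))"

end

theory Submission
  imports Defs
begin

text \<open>Over the completion, Weierstrass preparation writes a distinguished series as a unit times
  its Weierstrass polynomial, and orders of distinguishedness add up under multiplication, since
  the closure of \<open>P\<close> is prime. Hence a factorisation \<open>f = g h\<close> into nonunits of \<open>R[[X]]\<close> gives
  \<open>P\<^sub>f = P\<^sub>g P\<^sub>h\<close> with nonconstant factors. Conversely, let \<open>P\<^sub>f = G H\<close> with \<open>G, H\<close> monic. The
  hypothesis on divisors of \<open>f\<^sub>0\<close> makes the constant term of \<open>G\<close> associate to the image of some
  \<open>e \<in> R\<close>. Since \<open>R\<close> and its completion have the same quotient by \<open>f\<^sub>0\<close>, \<open>G\<close> can be corrected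
  modulo \<open>f\<close> to a series \<open>g\<close> over \<open>R\<close> with \<open>P\<^sub>g = G\<close>, and the cofactor of \<open>g\<close> in \<open>f\<close> descends
  to \<open>R\<close> coefficient by coefficient, because the completion map reflects divisibility by
  divisors of \<open>f\<^sub>0\<close>.\<close>

declare One_nat_def [simp del] \<comment> \<open>keeps \<open>Fil 1\<close> from turning into \<open>Fil (Suc 0)\<close>\<close>

lemma is_ideal_UNIV: "is_ideal (UNIV :: 'a::comm_ring_1 set)"
  by (simp add: is_ideal_def)

lemma is_ideal_ideal_gen: "is_ideal (ideal_gen S)"
  unfolding ideal_gen_def is_ideal_def by auto

lemma ideal_gen_subset: "S \<subseteq> ideal_gen S"
  unfolding ideal_gen_def by auto

lemma ideal_gen_least: "is_ideal I \<Longrightarrow> S \<subseteq> I \<Longrightarrow> ideal_gen S \<subseteq> I"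
  unfolding ideal_gen_def by auto

context
  fixes I :: "'a::comm_ring_1 set"
  assumes I: "is_ideal I"
begin

lemma ideal_zero: "0 \<in> I"
  using I unfolding is_ideal_def by blast

lemma ideal_add: "a \<in> I \<Longrightarrow> b \<in> I \<Longrightarrow> a + b \<in> I"
  using I unfolding is_ideal_def by blast

lemma ideal_uminus: "a \<in> I \<Longrightarrow> - a \<in> I"
  using I unfolding is_ideal_def by blast

lemma ideal_diff: "a \<in> I \<Longrightarrow> b \<in> I \<Longrightarrow> a - b \<in> I"
  using ideal_add ideal_uminus by (metis diff_conv_add_uminus)

lemma ideal_mult_left: "a \<in> I \<Longrightarrow> r * a \<in> I"
  using I unfolding is_ideal_def by blast

lemma ideal_mult_right: "a \<in> I \<Longrightarrow> a * r \<in> I"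
  using ideal_mult_left by (metis mult.commute)

lemma ideal_sum: "(\<And>x. x \<in> A \<Longrightarrow> f x \<in> I) \<Longrightarrow> sum f A \<in> I"
  by (induct A rule: infinite_finite_induct) (auto simp: ideal_zero ideal_add)

lemma sum_minus_term_in_ideal:
  assumes "finite A" "a \<in> A" "\<And>i. i \<in> A \<Longrightarrow> i \<noteq> a \<Longrightarrow> f i \<in> I"
  shows "sum f A - f a \<in> I"
  using assms by (simp add: sum.remove) (intro ideal_sum, auto)

lemma coset_eq_iff: "coset I a = coset I b \<longleftrightarrow> a - b \<in> I"
proof
  assume "coset I a = coset I b"
  moreover have "a \<in> coset I a" unfolding coset_def using ideal_zero by force
  ultimately obtain x where "x \<in> I" "a = b + x" unfolding coset_def by auto
  then show "a - b \<in> I" by simp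
next
  assume d: "a - b \<in> I"
  show "coset I a = coset I b"
  proof (auto simp: coset_def)
    fix x assume "x \<in> I"
    then show "\<exists>y. a + x = b + y \<and> y \<in> I"
      by (intro exI[of _ "(a - b) + x"]) (auto intro: ideal_add d)
  next
    fix x assume "x \<in> I"
    then show "\<exists>y. b + x = a + y \<and> y \<in> I"
      by (intro exI[of _ "x - (a - b)"]) (auto intro: ideal_diff d)
  qed
qed

lemma mem_coset_iff: "x \<in> coset I a \<longleftrightarrow> x - a \<in> I"
  unfolding coset_def by (auto intro!: exI[of _ "x - a"])

lemma coset_self: "a \<in> coset I a"
  by (simp add: mem_coset_iff ideal_zero)

lemma coset_eqI: "x \<in> coset I a \<Longrightarrow> x \<in> coset I b \<Longrightarrow> coset I a = coset I b"
  using ideal_diff[of "x - b" "x - a"] by (simp add: mem_coset_iff coset_eq_iff)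

end

lemma coset_UNIV [simp]: "coset UNIV a = UNIV"
  unfolding coset_def by (auto intro!: exI[of _ "x - a" for x])

lemma is_ideal_ideal_pow: "is_ideal (ideal_pow P n)"
  by (cases n) (auto simp: is_ideal_UNIV is_ideal_ideal_gen)

lemma ideal_pow_mult_mem: "a \<in> P \<Longrightarrow> b \<in> ideal_pow P n \<Longrightarrow> a * b \<in> ideal_pow P (Suc n)"
  using ideal_gen_subset by fastforce

lemma ideal_pow_one:
  assumes "is_ideal P" shows "ideal_pow P 1 = P"
proof
  show "ideal_pow P 1 \<subseteq> P"
    unfolding One_nat_def ideal_pow.simps
    using assms by (intro ideal_gen_least) (auto intro: ideal_mult_right)
  show "P \<subseteq> ideal_pow P 1"
    using ideal_pow_mult_mem[of _ P 1 0] by (auto simp: One_nat_def)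
qed

declare ideal_pow.simps(2) [simp del]

lemma is_ideal_principal: "is_ideal (principal (c::'a::comm_ring_1))"
  unfolding is_ideal_def principal_def
  by (auto simp: distrib_left[symmetric] mult.left_commute[of _ c] intro: exI[of _ 0])
     (metis mult_minus_right)

lemma coset_principal_eq_iff: "coset (principal c) a = coset (principal c) b \<longleftrightarrow> c dvd a - b"
  using coset_eq_iff[OF is_ideal_principal] by (auto simp: principal_def dvd_def)

lemma fps_dvd_1_iff: "(F :: 'a::comm_ring_1 fps) dvd 1 \<longleftrightarrow> F $ 0 dvd 1"
proof
  assume "F dvd 1"
  then obtain G where "1 = F * G" by (rule dvdE)
  then have "1 = F $ 0 * G $ 0" by (metis fps_mult_nth_0 fps_one_nth)
  then show "F $ 0 dvd 1" by (rule dvdI)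
next
  assume "F $ 0 dvd 1"
  then obtain y where "1 = F $ 0 * y" by (rule dvdE)
  then have "F * fps_right_inverse F y = 1" by (intro fps_right_inverse) simp
  then show "F dvd 1" by (metis dvdI)
qed

lemma fps_map_nth [simp]: "fps_map \<iota> F $ n = \<iota> (F $ n)"
  by (simp add: fps_map_def)

lemma fps_eq_0_if_fps_X_power_dvd:
  assumes "\<And>N. fps_X ^ N dvd (F :: 'a::comm_ring_1 fps)"
  shows "F = 0"
proof (rule fps_ext)
  fix n
  obtain G where "F = fps_X ^ Suc n * G" using assms by (metis dvdE)
  then show "F $ n = 0 $ n" by (simp add: fps_X_power_mult_nth del: power_Suc)
qed

lemma fps_shift_eq_const_plus_fps_X_mult:
  "fps_shift m G = fps_const (G $ m) + fps_X * fps_shift (Suc m) (G :: 'a::comm_ring_1 fps)"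
  by (rule fps_ext) (simp add: fps_X_mult_nth)

text \<open>Peel off one coefficient at a time; the remainders converge \<open>X\<close>-adically.\<close>
lemma fps_eq_fps_map_plus_mult:
  fixes F :: "'b::comm_ring_1 fps" and \<iota> :: "'a::zero \<Rightarrow> 'b"
  assumes const: "\<And>y. \<exists>r s. y = \<iota> r + F $ 0 * s"
  shows "\<exists>k S. Y = fps_map \<iota> k + F * S"
proof -
  obtain R Sf where RS: "\<And>y. y = \<iota> (R y) + F $ 0 * Sf y"
    using const by metis
  define step where
    "step X = fps_shift 1 (X - fps_const (\<iota> (R (X $ 0))) - fps_const (Sf (X $ 0)) * F)" for X
  define Ys where "Ys m = (step ^^ m) Y" for m
  define k where "k = Abs_fps (\<lambda>m. R (Ys m $ 0))"
  define S where "S = Abs_fps (\<lambda>m. Sf (Ys m $ 0))"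
  have Ys: "Ys m = fps_const (\<iota> (k $ m)) + fps_const (S $ m) * F + fps_X * Ys (Suc m)" for m
  proof -
    define Z where "Z = Ys m - fps_const (\<iota> (k $ m)) - fps_const (S $ m) * F"
    have "Z $ 0 = 0"
      using RS[of "Ys m $ 0"] by (simp add: Z_def k_def S_def algebra_simps)
    then have "Z = fps_X * fps_shift 1 Z"
      using fps_shift_eq_const_plus_fps_X_mult[of 0 Z, folded One_nat_def] by simp
    moreover have "Ys (Suc m) = fps_shift 1 Z"
      by (simp add: Ys_def step_def Z_def k_def S_def)
    ultimately show ?thesis
      by (simp add: Z_def algebra_simps)
  qed
  define D where "D m = Ys m - (fps_shift m (fps_map \<iota> k) + F * fps_shift m S)" for m
  have D: "D m = fps_X * D (Suc m)" for m
    using fps_shift_eq_const_plus_fps_X_mult[of m "fps_map \<iota> k"]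
      fps_shift_eq_const_plus_fps_X_mult[of m S]
    by (simp add: D_def Ys[of m] algebra_simps)
  have "D 0 = fps_X ^ N * D N" for N
    by (induct N) (simp_all add: D[symmetric] mult.assoc[symmetric] mult.commute)
  then have "D 0 = 0"
    by (intro fps_eq_0_if_fps_X_power_dvd) (metis dvdI)
  then show ?thesis
    by (auto simp: D_def Ys_def)
qed

lemma fps_map_inj: "inj \<iota> \<Longrightarrow> fps_map \<iota> F = fps_map \<iota> G \<Longrightarrow> F = G"
  by (rule fps_ext) (metis fps_map_nth injD)

lemma associated_imp_unit_multiple:
  assumes "(a::'a::idom) dvd b" "b dvd a"
  obtains w where "w dvd 1" "a = b * w"
proof (cases "b = 0")
  case True
  then show ?thesis using assms that[of 1] by simp
next
  case False
  obtain x where x: "b = a * x" using assms(1) by (rule dvdE)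
  obtain y where y: "a = b * y" using assms(2) by (rule dvdE)
  have "b * (y * x) = b * 1" using x y by (simp add: mult.assoc)
  then have "1 = y * x" using False by simp
  then have "y dvd 1" by (rule dvdI)
  then show ?thesis using y that by blast
qed

lemma degree_neq_0_if_not_dvd_1:
  assumes "lead_coeff Q dvd 1" "\<not> Q dvd 1"
  shows "degree (Q :: 'a::idom poly) \<noteq> 0"
proof
  assume "degree Q = 0"
  then obtain c where "Q = [:c:]" by (rule degree_eq_zeroE)
  with assms show False by (simp add: is_unit_const_poly_iff)
qed

section \<open>The \<open>P\<close>-adic completion\<close>

locale padic_completion =
  fixes P :: "'a::idom set" and \<iota> :: "'a \<Rightarrow> 'b::idom" and \<phi> :: "'b \<Rightarrow> nat \<Rightarrow> 'a set"
  assumes prime: "is_prime_ideal P" and completion: "is_padic_completion P \<iota> \<phi>"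
begin

lemma is_ideal_P: "is_ideal P"
  using prime by (simp add: is_prime_ideal_def)

lemma ideal_pow_P_1 [simp]: "ideal_pow P 1 = P"
  by (rule ideal_pow_one[OF is_ideal_P])

lemma proj_in_invlim: "\<phi> x \<in> invlim P"
  using completion unfolding is_padic_completion_def by (meson UNIV_I bij_betw_apply)

lemma proj_is_coset: "\<exists>a. \<phi> x n = coset (ideal_pow P n) a"
  using proj_in_invlim[of x] unfolding invlim_def by blast

lemma proj_antimono: "n \<le> m \<Longrightarrow> \<phi> x m \<subseteq> \<phi> x n"
proof (induct m rule: dec_induct)
  case (step m)
  then show ?case
    using proj_in_invlim[of x] unfolding invlim_def by blast
qed simp

lemma proj_inj: "\<phi> x = \<phi> y \<Longrightarrow> x = y"
  using completion unfolding is_padic_completion_def bij_betw_def inj_on_def by blast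

lemma proj_surj: "y \<in> invlim P \<Longrightarrow> \<exists>x. \<phi> x = y"
  using completion unfolding is_padic_completion_def bij_betw_def by (metis imageE)

lemma proj_of: "\<phi> (\<iota> a) n = coset (ideal_pow P n) a"
  using completion unfolding is_padic_completion_def by blast

lemma proj_add_mult:
  "\<phi> x n = coset (ideal_pow P n) a \<Longrightarrow> \<phi> y n = coset (ideal_pow P n) b \<Longrightarrow>
    \<phi> (x + y) n = coset (ideal_pow P n) (a + b) \<and> \<phi> (x * y) n = coset (ideal_pow P n) (a * b)"
  using completion unfolding is_padic_completion_def by blast

lemma proj_add_mult_cong:
  assumes "\<phi> x n = \<phi> x' n" "\<phi> y n = \<phi> y' n"
  shows "\<phi> (x + y) n = \<phi> (x' + y') n" "\<phi> (x * y) n = \<phi> (x' * y') n"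
proof -
  obtain a b where a: "\<phi> x n = coset (ideal_pow P n) a" and b: "\<phi> y n = coset (ideal_pow P n) b"
    using proj_is_coset by metis
  moreover from a b assms have "\<phi> x' n = coset (ideal_pow P n) a" "\<phi> y' n = coset (ideal_pow P n) b"
    by simp_all
  ultimately show "\<phi> (x + y) n = \<phi> (x' + y') n" "\<phi> (x * y) n = \<phi> (x' * y') n"
    using proj_add_mult by simp_all
qed

lemma iota_add: "\<iota> (a + b) = \<iota> a + \<iota> b"
  by (rule proj_inj, rule ext) (simp add: proj_of proj_add_mult[OF proj_of proj_of])

lemma iota_mult: "\<iota> (a * b) = \<iota> a * \<iota> b"
  by (rule proj_inj, rule ext) (simp add: proj_of proj_add_mult[OF proj_of proj_of])

lemma iota_0 [simp]: "\<iota> 0 = 0"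
  using iota_add[of 0 0] by (metis add_cancel_right_right)

lemma iota_uminus: "\<iota> (- a) = - \<iota> a"
  using iota_add[of a "- a"] minus_unique[of "\<iota> a" "\<iota> (- a)"] by simp

lemma iota_diff: "\<iota> (a - b) = \<iota> a - \<iota> b"
  using iota_add[of a "- b"] iota_uminus by simp

lemma iota_1 [simp]: "\<iota> 1 = 1"
proof -
  have "\<phi> (\<iota> 1 * 1) n = \<phi> 1 n" for n
    using proj_is_coset[of 1 n] proj_add_mult[OF proj_of] by force
  then show ?thesis
    using proj_inj[of "\<iota> 1 * 1" 1] by auto
qed

lemma iota_sum: "\<iota> (sum g A) = (\<Sum>x\<in>A. \<iota> (g x))"
  using sum_comp_morphism[of \<iota> g A] iota_add by (simp add: o_def)

lemma iota_dvd_1: "a dvd 1 \<Longrightarrow> \<iota> a dvd 1"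
  by (metis dvdE dvdI iota_1 iota_mult)

text \<open>\<open>Fil k\<close> is the kernel of the projection onto \<open>R/P\<^sup>k\<close>, i.e. the closure of the image
  of \<open>P\<^sup>k\<close>; in particular \<open>Fil 1\<close> is the closure of \<open>P\<close> in the completion.\<close>
definition Fil :: "nat \<Rightarrow> 'b set" where
  "Fil k = {x. \<phi> x k = \<phi> 0 k}"

lemma proj_eq_iff_diff_in_Fil: "\<phi> x k = \<phi> y k \<longleftrightarrow> x - y \<in> Fil k"
proof
  assume "\<phi> x k = \<phi> y k"
  then have "\<phi> (x + - y) k = \<phi> (y + - y) k"
    by (intro proj_add_mult_cong refl)
  then show "x - y \<in> Fil k" by (simp add: Fil_def)
next
  assume "x - y \<in> Fil k"
  then have "\<phi> ((x - y) + y) k = \<phi> (0 + y) k"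
    by (intro proj_add_mult_cong refl) (simp add: Fil_def)
  then show "\<phi> x k = \<phi> y k" by simp
qed

lemma is_ideal_Fil: "is_ideal (Fil k)"
  unfolding is_ideal_def
proof (intro conjI ballI allI)
  show "0 \<in> Fil k" by (simp add: Fil_def)
  fix x assume x: "x \<in> Fil k"
  show "x + y \<in> Fil k" if "y \<in> Fil k" for y
    using proj_add_mult_cong(1)[of x k 0 y 0] x that by (simp add: Fil_def)
  show "- x \<in> Fil k"
    using proj_add_mult_cong(2)[of "- 1" k "- 1" x 0] x by (simp add: Fil_def)
  show "r * x \<in> Fil k" for r
    using proj_add_mult_cong(2)[of r k r x 0] x by (simp add: Fil_def)
qed

lemma Fil_0 [simp]: "Fil 0 = UNIV"
  using proj_is_coset[of _ 0] by (auto simp: Fil_def)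

lemma Fil_antimono: "k \<le> m \<Longrightarrow> Fil m \<subseteq> Fil k"
proof
  fix x assume km: "k \<le> m" and "x \<in> Fil m"
  then have e: "\<phi> x m = \<phi> 0 m" by (simp add: Fil_def)
  obtain a where a: "\<phi> x m = coset (ideal_pow P m) a"
    using proj_is_coset by metis
  then have "a \<in> \<phi> x k" "a \<in> \<phi> 0 k"
    using coset_self[OF is_ideal_ideal_pow] proj_antimono[OF km] e by blast+
  then have "\<phi> x k = \<phi> 0 k"
    using proj_is_coset coset_eqI[OF is_ideal_ideal_pow] by metis
  then show "x \<in> Fil k" by (simp add: Fil_def)
qed

lemma of_in_Fil_iff: "\<iota> a \<in> Fil k \<longleftrightarrow> a \<in> ideal_pow P k"
  using proj_of[of a k] proj_of[of 0 k] by (simp add: Fil_def coset_eq_iff[OF is_ideal_ideal_pow])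

lemma proj_eq_of_mem: "a \<in> \<phi> x n \<Longrightarrow> \<phi> x n = \<phi> (\<iota> a) n"
  by (metis proj_is_coset proj_of coset_eqI coset_self is_ideal_ideal_pow)

lemma Fil_mult: assumes x: "x \<in> Fil 1" and y: "y \<in> Fil k" shows "x * y \<in> Fil (Suc k)"
proof -
  obtain a b where a: "a \<in> \<phi> x (Suc k)" and b: "b \<in> \<phi> y (Suc k)"
    using proj_is_coset coset_self[OF is_ideal_ideal_pow] by metis
  have "\<phi> x 1 = \<phi> (\<iota> a) 1"
    using a proj_antimono[of 1 "Suc k" x] by (intro proj_eq_of_mem) auto
  moreover have "\<phi> y k = \<phi> (\<iota> b) k"
    using b proj_antimono[of k "Suc k" y] by (intro proj_eq_of_mem) auto
  ultimately have "\<iota> a \<in> Fil 1" "\<iota> b \<in> Fil k"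
    using x y by (simp_all add: Fil_def)
  then have "a \<in> P" "b \<in> ideal_pow P k"
    by (simp_all add: of_in_Fil_iff)
  then have "\<iota> (a * b) \<in> Fil (Suc k)"
    by (simp add: of_in_Fil_iff ideal_pow_mult_mem)
  moreover have "\<phi> (x * y) (Suc k) = \<phi> (\<iota> a * \<iota> b) (Suc k)"
    using a b by (intro proj_add_mult_cong proj_eq_of_mem)
  ultimately show ?thesis
    by (simp add: Fil_def iota_mult)
qed

lemma Fil_power: "b \<in> Fil 1 \<Longrightarrow> b ^ k \<in> Fil k"
  by (induct k) (auto intro: Fil_mult)

lemma Fil_separated: "(\<And>k. x \<in> Fil k) \<Longrightarrow> x = 0"
  by (rule proj_inj) (auto simp: Fil_def)

lemma Fil_complete:
  assumes Cauchy: "\<And>k. x (Suc k) - x k \<in> Fil k"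
  shows "\<exists>L. \<forall>k. L - x k \<in> Fil k"
proof -
  define y where "y n = \<phi> (x n) n" for n
  have "y (Suc n) \<subseteq> y n" for n
  proof -
    have "\<phi> (x (Suc n)) n = \<phi> (x n) n"
      using Cauchy proj_eq_iff_diff_in_Fil by blast
    then show ?thesis
      using proj_antimono[of n "Suc n" "x (Suc n)"] by (simp add: y_def)
  qed
  then have "y \<in> invlim P"
    unfolding invlim_def y_def using proj_is_coset by blast
  then obtain L where "\<phi> L = y" using proj_surj by blast
  then show ?thesis using proj_eq_iff_diff_in_Fil y_def by metis
qed

lemma one_notin_Fil1: "(1::'b) \<notin> Fil 1"
proof
  assume "(1::'b) \<in> Fil 1"
  then have "1 \<in> P"
    using of_in_Fil_iff[of 1 1] by simp
  then have "r \<in> P" for r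
    using ideal_mult_left[OF is_ideal_P, of 1 r] by simp
  then show False using prime unfolding is_prime_ideal_def by auto
qed

lemma ex_proj_eq_proj_of: "\<exists>a. \<phi> x n = \<phi> (\<iota> a) n"
  using proj_is_coset[of x n] by (simp add: proj_of)

lemma Fil1_prime: assumes "x * y \<in> Fil 1" shows "x \<in> Fil 1 \<or> y \<in> Fil 1"
proof -
  obtain a b where a: "\<phi> x 1 = \<phi> (\<iota> a) 1" and b: "\<phi> y 1 = \<phi> (\<iota> b) 1"
    using ex_proj_eq_proj_of by blast
  have "\<phi> (x * y) 1 = \<phi> (\<iota> (a * b)) 1"
    using proj_add_mult_cong(2)[OF a b] by (simp add: iota_mult)
  with assms have "\<iota> (a * b) \<in> Fil 1"
    by (simp add: Fil_def)
  then have "a \<in> P \<or> b \<in> P"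
    using prime by (simp add: of_in_Fil_iff is_prime_ideal_def)
  then show ?thesis
    using a b of_in_Fil_iff[of _ 1] by (auto simp: Fil_def)
qed

lemma padic_closure_eq_Fil1: "padic_closure \<phi> (\<iota> ` P) = Fil 1"
proof safe
  fix x assume "x \<in> padic_closure \<phi> (\<iota> ` P)"
  then obtain y where "y \<in> \<iota> ` P" "\<phi> y 1 = \<phi> x 1"
    unfolding padic_closure_def by blast
  then show "x \<in> Fil 1"
    using of_in_Fil_iff[of _ 1] by (auto simp: Fil_def)
next
  fix x assume x: "x \<in> Fil 1"
  show "x \<in> padic_closure \<phi> (\<iota> ` P)" unfolding padic_closure_def
  proof safe
    fix n
    obtain a where a: "a \<in> \<phi> x n"
      using proj_is_coset coset_self[OF is_ideal_ideal_pow] by metis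
    show "\<exists>y\<in>\<iota> ` P. \<phi> y n = \<phi> x n"
    proof (cases n)
      case 0
      then show ?thesis
        using ideal_zero[OF is_ideal_P] proj_is_coset[of _ 0] by (auto intro!: bexI[of _ "\<iota> 0"])
    next
      case (Suc m)
      then have "\<phi> x 1 = \<phi> (\<iota> a) 1"
        using a proj_antimono[of 1 n x] by (intro proj_eq_of_mem) auto
      then have "\<iota> a \<in> Fil 1"
        using x by (simp add: Fil_def)
      then have "a \<in> P"
        by (simp add: of_in_Fil_iff)
      then show ?thesis
        using proj_eq_of_mem[OF a] by auto
    qed
  qed
qed

text \<open>The geometric series \<open>\<Sum> (-b)\<^sup>i\<close> converges and inverts \<open>1 + b\<close>.\<close>
lemma one_plus_Fil1_dvd_1: assumes b: "b \<in> Fil 1" shows "(1 + b) dvd 1"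
proof -
  define s where "s k = (\<Sum>i<k. (-b)^i)" for k
  have pow: "(-b)^k \<in> Fil k" for k
    using Fil_power b ideal_uminus[OF is_ideal_Fil] by blast
  then have "s (Suc k) - s k \<in> Fil k" for k
    by (simp add: s_def)
  then obtain L where L: "\<And>k. L - s k \<in> Fil k"
    using Fil_complete by blast
  have "(1 + b) * s k = 1 - (-b)^k" for k
    by (induct k) (simp_all add: s_def algebra_simps)
  then have "(1 + b) * L - 1 = (1 + b) * (L - s k) - (-b)^k" for k
    by (simp add: algebra_simps)
  moreover have "(1 + b) * (L - s k) - (-b)^k \<in> Fil k" for k
    by (rule ideal_diff[OF is_ideal_Fil ideal_mult_left[OF is_ideal_Fil L] pow])
  ultimately have "(1 + b) * L - 1 \<in> Fil k" for k
    by metis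
  then have "(1 + b) * L = 1"
    using Fil_separated[of "(1 + b) * L - 1"] by simp
  then show ?thesis by (metis dvdI)
qed

lemma dvd_1_if_mult_minus_1_in_Fil1: "x * c - 1 \<in> Fil 1 \<Longrightarrow> x dvd 1"
  using one_plus_Fil1_dvd_1[of "x * c - 1"] dvd_mult_left by force

lemma dvd_1_notin_Fil1: "x dvd 1 \<Longrightarrow> x \<notin> Fil 1"
  using one_notin_Fil1 ideal_mult_left[OF is_ideal_Fil] by (metis dvdE mult.commute)

subsection \<open>Weierstrass preparation\<close>

definition fps_Fil :: "nat \<Rightarrow> 'b fps set" where
  "fps_Fil k = {F. \<forall>n. F $ n \<in> Fil k}"

lemma fps_FilI: "(\<And>n. F $ n \<in> Fil k) \<Longrightarrow> F \<in> fps_Fil k"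
  by (simp add: fps_Fil_def)

lemma fps_FilD: "F \<in> fps_Fil k \<Longrightarrow> F $ n \<in> Fil k"
  by (simp add: fps_Fil_def)

lemma fps_Fil_0 [simp]: "fps_Fil 0 = UNIV"
  by (simp add: fps_Fil_def)

lemma fps_Fil_add: "F \<in> fps_Fil k \<Longrightarrow> G \<in> fps_Fil k \<Longrightarrow> F + G \<in> fps_Fil k"
  by (simp add: fps_Fil_def ideal_add[OF is_ideal_Fil])

lemma fps_Fil_uminus: "F \<in> fps_Fil k \<Longrightarrow> - F \<in> fps_Fil k"
  by (simp add: fps_Fil_def ideal_uminus[OF is_ideal_Fil])

lemma fps_Fil_antimono: "k \<le> m \<Longrightarrow> fps_Fil m \<subseteq> fps_Fil k"
  using Fil_antimono by (auto simp: fps_Fil_def)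

lemma fps_Fil_shift: "F \<in> fps_Fil k \<Longrightarrow> fps_shift d F \<in> fps_Fil k"
  by (simp add: fps_Fil_def)

lemma fps_Fil_mult_left: "F \<in> fps_Fil k \<Longrightarrow> G * F \<in> fps_Fil k"
  unfolding fps_Fil_def
  by (auto simp: fps_mult_nth intro!: ideal_sum[OF is_ideal_Fil] ideal_mult_left[OF is_ideal_Fil])

lemma fps_Fil_mult_right: "F \<in> fps_Fil k \<Longrightarrow> F * G \<in> fps_Fil k"
  using fps_Fil_mult_left[of F k G] by (simp add: mult.commute)

lemma fps_Fil_mult: "F \<in> fps_Fil 1 \<Longrightarrow> G \<in> fps_Fil k \<Longrightarrow> F * G \<in> fps_Fil (Suc k)"
  unfolding fps_Fil_def
  by (auto simp: fps_mult_nth intro!: ideal_sum[OF is_ideal_Fil] Fil_mult)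

lemma fps_Fil_separated: "(\<And>k. F \<in> fps_Fil k) \<Longrightarrow> F = 0"
  by (rule fps_ext) (auto intro: Fil_separated simp: fps_Fil_def)

lemma fps_Fil_complete:
  assumes Cauchy: "\<And>k. Fs (Suc k) - Fs k \<in> fps_Fil k"
  shows "\<exists>F. \<forall>k. F - Fs k \<in> fps_Fil k"
proof -
  have "\<exists>L. \<forall>k. L - Fs k $ n \<in> Fil k" for n
    using Fil_complete[of "\<lambda>k. Fs k $ n"] fps_FilD[OF Cauchy] by simp
  then obtain L where "\<And>n k. L n - Fs k $ n \<in> Fil k" by metis
  then show ?thesis
    by (intro exI[of _ "Abs_fps L"] allI fps_FilI) simp
qed

lemma fps_contraction_fixpoint:
  assumes contr: "\<And>V V' k. V - V' \<in> fps_Fil k \<Longrightarrow> T V - T V' \<in> fps_Fil (Suc k)"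
  shows "\<exists>V. T V = V"
proof -
  define Vs where "Vs k = (T ^^ k) 0" for k
  have "Vs (Suc k) - Vs k \<in> fps_Fil k" for k
    by (induct k) (simp_all add: Vs_def contr)
  then obtain V where V: "\<And>k. V - Vs k \<in> fps_Fil k"
    using fps_Fil_complete by blast
  have "T V - V \<in> fps_Fil k" for k
  proof -
    have "T V - T (Vs k) \<in> fps_Fil k" "Vs (Suc k) - V \<in> fps_Fil k"
      using contr[OF V[of k]] fps_Fil_uminus[OF V[of "Suc k"]] fps_Fil_antimono[of k "Suc k"]
      by auto
    from fps_Fil_add[OF this] show ?thesis
      by (simp add: Vs_def)
  qed
  then show ?thesis
    using fps_Fil_separated[of "T V - V"] by auto
qed

definition is_weierstrass_poly :: "'b poly \<Rightarrow> bool" where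
  "is_weierstrass_poly Q \<longleftrightarrow> lead_coeff Q = 1 \<and> (\<forall>i<degree Q. coeff Q i \<in> Fil 1)"

abbreviation Wpoly :: "'b fps \<Rightarrow> 'b poly" where
  "Wpoly \<equiv> weierstrass_poly (Fil 1)"

text \<open>Writing \<open>g = A + X\<^sup>d E\<close> with \<open>A \<in> Fil 1[[X]]\<close> of degree \<open>< d\<close> and \<open>E\<close> a unit, the
  condition on \<open>V\<close> is the fixed point equation \<open>V = E\<^sup>-\<^sup>1 (1 - shift\<^sub>d (V A))\<close> of a contraction.\<close>
lemma distinguished_unit_multiple_is_poly:
  assumes "distinguished_of_order (Fil 1) d g"
  obtains V where "V dvd 1" "\<And>n. n < d \<Longrightarrow> (V * g) $ n \<in> Fil 1"
    "\<And>n. d \<le> n \<Longrightarrow> (V * g) $ n = (if n = d then 1 else 0)"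
proof -
  obtain c where low: "\<forall>i<d. g $ i \<in> Fil 1" and lead: "g $ d * c - 1 \<in> Fil 1"
    using assms by (auto simp: distinguished_of_order_def)
  define A where "A = fps_cutoff d g"
  define E where "E = fps_shift d g"
  have A: "A \<in> fps_Fil 1"
    by (rule fps_FilI) (simp add: A_def low ideal_zero[OF is_ideal_Fil])
  have "E dvd 1"
    using dvd_1_if_mult_minus_1_in_Fil1[OF lead] by (simp add: E_def fps_dvd_1_iff)
  then obtain W where EW: "E * W = 1" by (metis dvdE)
  have g: "g = A + fps_X ^ d * E"
    using fps_shift_cutoff'[of d g] by (simp add: A_def E_def add.commute)
  obtain V where V: "W * (1 - fps_shift d (V * A)) = V"
  proof (rule fps_contraction_fixpoint[THEN exE])
    fix V V' k assume "V - V' \<in> fps_Fil k"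
    then have "(V' - V) * A \<in> fps_Fil (Suc k)"
      using fps_Fil_mult[OF A, of "V' - V"] fps_Fil_uminus by (fastforce simp: mult.commute)
    moreover have "W * (1 - fps_shift d (V * A)) - W * (1 - fps_shift d (V' * A))
        = W * fps_shift d ((V' - V) * A)"
      by (simp add: fps_shift_diff algebra_simps)
    ultimately show "W * (1 - fps_shift d (V * A)) - W * (1 - fps_shift d (V' * A)) \<in> fps_Fil (Suc k)"
      by (simp add: fps_Fil_mult_left fps_Fil_shift)
  qed
  then have EV: "E * V = 1 - fps_shift d (V * A)"
    using EW by (metis mult.assoc mult_1)
  have VA: "V * A \<in> fps_Fil 1"
    by (rule fps_Fil_mult_left[OF A])
  have Vg: "V * g = V * A + fps_X ^ d * (E * V)"
    by (simp add: g algebra_simps)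
  have "(E * V) $ 0 - 1 \<in> Fil 1"
    using fps_FilD[OF VA, of d] ideal_uminus[OF is_ideal_Fil] by (simp add: EV)
  then have "V dvd 1"
    using dvd_1_if_mult_minus_1_in_Fil1[of "V $ 0" "E $ 0"] by (simp add: mult.commute fps_dvd_1_iff)
  moreover have "(V * g) $ n \<in> Fil 1" if "n < d" for n
    using that fps_FilD[OF VA, of n] by (simp add: Vg fps_X_power_mult_nth)
  moreover have "(V * g) $ n = (if n = d then 1 else 0)" if "d \<le> n" for n
    using that by (simp add: Vg EV fps_X_power_mult_nth)
  ultimately show ?thesis using that by blast
qed

lemma weierstrass_preparation:
  assumes "distinguished_of_order (Fil 1) d g"
  shows "\<exists>U Q. U dvd 1 \<and> g = U * fps_of_poly Q \<and> is_weierstrass_poly Q \<and> degree Q = d"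
proof -
  obtain V where V: "V dvd 1" and low: "\<And>n. n < d \<Longrightarrow> (V * g) $ n \<in> Fil 1"
    and high: "\<And>n. d \<le> n \<Longrightarrow> (V * g) $ n = (if n = d then 1 else 0)"
    using distinguished_unit_multiple_is_poly[OF assms] by blast
  define Q where "Q = truncate_fps (Suc d) (V * g)"
  have VgQ: "V * g = fps_of_poly Q"
    by (rule fps_ext) (auto simp: Q_def high)
  have coeff_Q: "coeff Q n = (V * g) $ n" if "n \<le> d" for n
    using that by (simp add: Q_def coeff_truncate_fps)
  have "degree Q = d"
    using coeff_Q[of d] high[of d] degree_truncate_fps[of "Suc d" "V * g"]
    by (simp add: Q_def le_degree antisym)
  moreover have "is_weierstrass_poly Q"
    using calculation coeff_Q high[of d] low by (simp add: is_weierstrass_poly_def)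
  moreover obtain U where "V * U = 1"
    using V by (metis dvdE)
  then have "U dvd 1" "g = U * fps_of_poly Q"
    using VgQ by (metis dvdI mult.commute, metis VgQ mult.assoc mult.commute mult_1)
  ultimately show ?thesis by blast
qed

lemma fps_mult_low_coeffs_in_Fil1:
  assumes F: "\<forall>m<i. F $ m \<in> Fil 1" and G: "\<forall>m<j. G $ m \<in> Fil 1"
  shows "\<forall>m<i+j. (F * G) $ m \<in> Fil 1" and "(F * G) $ (i + j) - F $ i * G $ j \<in> Fil 1"
proof -
  have summand: "F $ a * G $ (n - a) \<in> Fil 1" if "n \<le> i + j" "a \<le> n" "n < i + j \<or> a \<noteq> i" for n a
  proof (cases "a < i")
    case True
    then show ?thesis using F by (simp add: ideal_mult_right[OF is_ideal_Fil])
  next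
    case False
    then have "n - a < j" using that by auto
    then show ?thesis using G by (simp add: ideal_mult_left[OF is_ideal_Fil])
  qed
  show "\<forall>m<i+j. (F * G) $ m \<in> Fil 1"
    by (auto simp: fps_mult_nth intro!: ideal_sum[OF is_ideal_Fil] summand)
  have "(\<Sum>a = 0..i + j. F $ a * G $ (i + j - a)) - F $ i * G $ (i + j - i) \<in> Fil 1"
    by (rule sum_minus_term_in_ideal[OF is_ideal_Fil]) (auto intro: summand)
  then show "(F * G) $ (i + j) - F $ i * G $ j \<in> Fil 1"
    by (simp add: fps_mult_nth)
qed

lemma is_weierstrass_poly_coeff_notin_Fil1_iff:
  assumes "is_weierstrass_poly Q" shows "coeff Q n \<notin> Fil 1 \<longleftrightarrow> n = degree Q"
proof (cases "n < degree Q")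
  case False
  then show ?thesis
    using assms one_notin_Fil1 ideal_zero[OF is_ideal_Fil] coeff_eq_0[of Q n]
    by (cases "n = degree Q") (auto simp: is_weierstrass_poly_def)
qed (use assms in \<open>auto simp: is_weierstrass_poly_def\<close>)

lemma is_weierstrass_poly_dvd_1_iff: "is_weierstrass_poly Q \<Longrightarrow> Q dvd 1 \<longleftrightarrow> degree Q = 0"
  by (auto simp: is_weierstrass_poly_def is_unit_poly_iff elim!: degree_eq_zeroE)

lemma is_weierstrass_poly_mult:
  assumes A: "is_weierstrass_poly A" and B: "is_weierstrass_poly B"
  shows "is_weierstrass_poly (A * B)"
proof -
  have "A \<noteq> 0" "B \<noteq> 0"
    using A B by (auto simp: is_weierstrass_poly_def)
  then have "degree (A * B) = degree A + degree B"
    by (rule degree_mult_eq)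
  moreover have "\<forall>m<degree A + degree B. (fps_of_poly A * fps_of_poly B) $ m \<in> Fil 1"
    using A B by (intro fps_mult_low_coeffs_in_Fil1(1)) (auto simp: is_weierstrass_poly_def)
  moreover have "lead_coeff (A * B) = 1"
    using A B by (simp add: is_weierstrass_poly_def lead_coeff_mult)
  ultimately show ?thesis
    by (simp add: is_weierstrass_poly_def flip: fps_of_poly_mult)
qed

lemma least_coeff_notin_Fil1:
  assumes "F $ n \<notin> Fil 1"
  obtains i where "i \<le> n" "F $ i \<notin> Fil 1" "\<forall>m<i. F $ m \<in> Fil 1"
proof
  define i where "i = (LEAST i. F $ i \<notin> Fil 1)"
  show "i \<le> n" "F $ i \<notin> Fil 1"
    unfolding i_def using assms by (rule Least_le, rule LeastI)
  show "\<forall>m<i. F $ m \<in> Fil 1"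
    unfolding i_def using not_less_Least by blast
qed

lemma is_weierstrass_poly_factor:
  assumes W: "is_weierstrass_poly (A * B)" and A: "lead_coeff A = 1" and B: "lead_coeff B = 1"
  shows "is_weierstrass_poly A"
proof -
  have "fps_of_poly A $ degree A \<notin> Fil 1" "fps_of_poly B $ degree B \<notin> Fil 1"
    using A B one_notin_Fil1 by simp_all
  then obtain i j where i: "i \<le> degree A" "coeff A i \<notin> Fil 1" "\<forall>m<i. fps_of_poly A $ m \<in> Fil 1"
    and j: "j \<le> degree B" "coeff B j \<notin> Fil 1" "\<forall>m<j. fps_of_poly B $ m \<in> Fil 1"
    by (metis least_coeff_notin_Fil1 fps_of_poly_nth)
  have "coeff A i * coeff B j \<notin> Fil 1"
    using i j Fil1_prime by blast
  moreover have "coeff (A * B) (i + j) - coeff A i * coeff B j \<in> Fil 1"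
    using fps_mult_low_coeffs_in_Fil1(2)[OF i(3) j(3)] by (simp flip: fps_of_poly_mult)
  ultimately have "coeff (A * B) (i + j) \<notin> Fil 1"
    using ideal_diff[OF is_ideal_Fil, of "coeff (A * B) (i + j)"] by force
  moreover have "degree (A * B) = degree A + degree B"
    using A B by (intro degree_mult_eq) auto
  ultimately have "i = degree A"
    using is_weierstrass_poly_coeff_notin_Fil1_iff[OF W] i j by simp
  then show ?thesis
    using A i by (simp add: is_weierstrass_poly_def)
qed

lemma is_weierstrass_poly_normalize_factors:
  assumes W: "is_weierstrass_poly (G * H)"
  shows "lead_coeff G * lead_coeff H = 1"
    and "is_weierstrass_poly (smult (lead_coeff H) G)" "is_weierstrass_poly (smult (lead_coeff G) H)"
    and "smult (lead_coeff H) G * smult (lead_coeff G) H = G * H"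
proof -
  show uv: "lead_coeff G * lead_coeff H = 1"
    using W by (simp add: is_weierstrass_poly_def lead_coeff_mult)
  then have vu: "lead_coeff H * lead_coeff G = 1"
    by (simp only: mult.commute)
  have "G \<noteq> 0" "H \<noteq> 0"
    using uv by auto
  then have lc: "lead_coeff (smult (lead_coeff H) G) = 1" "lead_coeff (smult (lead_coeff G) H) = 1"
    using uv vu by simp_all
  show GH: "smult (lead_coeff H) G * smult (lead_coeff G) H = G * H"
    using uv by (simp add: mult_smult_left mult_smult_right smult_smult)
  from W have "is_weierstrass_poly (smult (lead_coeff H) G * smult (lead_coeff G) H)"
    unfolding GH .
  then show "is_weierstrass_poly (smult (lead_coeff H) G)"
    using lc by (rule is_weierstrass_poly_factor)
  from W have "is_weierstrass_poly (smult (lead_coeff G) H * smult (lead_coeff H) G)"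
    unfolding mult.commute[of "smult (lead_coeff G) H"] GH .
  then show "is_weierstrass_poly (smult (lead_coeff G) H)"
    using lc(2,1) by (rule is_weierstrass_poly_factor)
qed

text \<open>Induction on \<open>k\<close>: the coefficient of \<open>X\<^sup>m\<^sup>+\<^sup>d\<^sup>e\<^sup>g \<^sup>Q\<close> in \<open>Z Q\<close> is \<open>Z\<^sub>m\<close> plus terms in
  \<open>Fil 1 \<sqdot> Fil k\<close>.\<close>
lemma weierstrass_division_unique:
  assumes Q: "is_weierstrass_poly Q"
    and ZQ: "\<And>n. degree Q \<le> n \<Longrightarrow> (Z * fps_of_poly Q) $ n = 0"
  shows "Z = 0"
proof (rule fps_Fil_separated)
  fix k show "Z \<in> fps_Fil k"
  proof (induct k)
    case (Suc k)
    show ?case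
    proof (rule fps_FilI)
      fix m
      define d where "d = degree Q"
      define t where "t i = Z $ i * coeff Q (m + d - i)" for i
      have "sum t {0..m+d} - t m \<in> Fil (Suc k)"
      proof (rule sum_minus_term_in_ideal[OF is_ideal_Fil])
        fix i assume i: "i \<in> {0..m+d}" "i \<noteq> m"
        show "t i \<in> Fil (Suc k)"
        proof (cases "i < m")
          case True
          then show ?thesis by (simp add: t_def d_def coeff_eq_0 ideal_zero[OF is_ideal_Fil])
        next
          case False
          then have "coeff Q (m + d - i) \<in> Fil 1"
            using i Q by (simp add: d_def is_weierstrass_poly_def)
          from Fil_mult[OF this fps_FilD[OF Suc]] show ?thesis
            by (simp add: t_def mult.commute)
        qed
      qed auto
      moreover have "sum t {0..m+d} = 0" "t m = Z $ m"
        using ZQ[of "m + d"] Q by (simp_all add: t_def fps_mult_nth d_def is_weierstrass_poly_def)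
      ultimately show "Z $ m \<in> Fil (Suc k)"
        using ideal_uminus[OF is_ideal_Fil] by fastforce
    qed
  qed simp
qed

lemma degree_eq_if_unit_multiple:
  assumes W: "W dvd 1" and Q1W: "fps_of_poly Q1 = W * fps_of_poly Q2"
    and Q1: "is_weierstrass_poly Q1" and Q2: "is_weierstrass_poly Q2"
  shows "degree Q1 = degree Q2"
proof -
  define d where "d = degree Q2"
  have "(W * fps_of_poly Q2) $ (0 + d) - W $ 0 * fps_of_poly Q2 $ d \<in> Fil 1"
    using Q2 by (intro fps_mult_low_coeffs_in_Fil1(2)) (auto simp: d_def is_weierstrass_poly_def)
  then have diff: "coeff Q1 d - W $ 0 \<in> Fil 1"
    using Q2 by (simp add: d_def is_weierstrass_poly_def flip: Q1W)
  have "coeff Q1 d \<notin> Fil 1"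
  proof
    assume "coeff Q1 d \<in> Fil 1"
    from ideal_diff[OF is_ideal_Fil this diff] W show False
      by (simp add: fps_dvd_1_iff dvd_1_notin_Fil1)
  qed
  then show ?thesis
    using is_weierstrass_poly_coeff_notin_Fil1_iff[OF Q1] by (simp add: d_def)
qed

lemma weierstrass_factorization_unique:
  assumes U1: "U1 dvd 1" and U2: "U2 dvd 1" and eq: "U1 * fps_of_poly Q1 = U2 * fps_of_poly Q2"
    and Q1: "is_weierstrass_poly Q1" and Q2: "is_weierstrass_poly Q2"
  shows "Q1 = Q2"
proof -
  obtain U1' where U1': "U1 * U1' = 1" using U1 by (metis dvdE)
  define W where "W = U1' * U2"
  have "U1' dvd 1"
    using dvd_triv_right[of U1' U1] U1' by simp
  then have W: "W dvd 1"
    using mult_dvd_mono[OF _ U2] by (fastforce simp: W_def)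
  have "fps_of_poly Q1 = (U1 * U1') * fps_of_poly Q1"
    using U1' by simp
  also have "\<dots> = U1' * (U1 * fps_of_poly Q1)"
    by (simp only: mult_ac)
  also have "\<dots> = W * fps_of_poly Q2"
    by (simp add: eq W_def mult.assoc)
  finally have Q1W: "fps_of_poly Q1 = W * fps_of_poly Q2" .
  have deg: "degree Q1 = degree Q2"
    by (rule degree_eq_if_unit_multiple[OF W Q1W Q1 Q2])
  have "coeff Q1 n = coeff Q2 n" if "degree Q2 \<le> n" for n
  proof (cases "n = degree Q2")
    case True
    then show ?thesis using Q1 Q2 deg by (simp add: is_weierstrass_poly_def)
  next
    case False
    then show ?thesis using that deg by (simp add: coeff_eq_0)
  qed
  then have "W - 1 = 0"
    by (intro weierstrass_division_unique[OF Q2]) (simp add: algebra_simps flip: Q1W)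
  then show ?thesis
    using Q1W by (simp add: fps_of_poly_eq_iff)
qed

lemma weierstrass_poly_eqI:
  assumes "U dvd 1" "g = U * fps_of_poly Q" "is_weierstrass_poly Q"
  shows "Wpoly g = Q"
  unfolding weierstrass_poly_def
proof (rule the_equality)
  show "lead_coeff Q = 1 \<and> (\<forall>i<degree Q. coeff Q i \<in> Fil 1) \<and> (\<exists>U. U dvd 1 \<and> g = U * fps_of_poly Q)"
    using assms by (auto simp: is_weierstrass_poly_def)
  fix Q' assume "lead_coeff Q' = 1 \<and> (\<forall>i<degree Q'. coeff Q' i \<in> Fil 1) \<and>
      (\<exists>U. U dvd 1 \<and> g = U * fps_of_poly Q')"
  then show "Q' = Q"
    using weierstrass_factorization_unique assms by (auto simp: is_weierstrass_poly_def)
qed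

lemma weierstrass_poly_of_distinguished:
  assumes "distinguished_of_order (Fil 1) d g"
  shows "is_weierstrass_poly (Wpoly g)" "degree (Wpoly g) = d"
    "\<exists>U. U dvd 1 \<and> g = U * fps_of_poly (Wpoly g)"
  using weierstrass_preparation[OF assms] weierstrass_poly_eqI by metis+

lemma fps_map_mult: "fps_map \<iota> (g * h) = fps_map \<iota> g * fps_map \<iota> h"
  by (rule fps_ext) (simp add: fps_mult_nth iota_sum iota_mult)

lemma distinguished_of_order_coeff_notin_Fil1:
  "distinguished_of_order (Fil 1) n G \<Longrightarrow> G $ n \<notin> Fil 1"
  using dvd_1_notin_Fil1 dvd_1_if_mult_minus_1_in_Fil1 by (auto simp: distinguished_of_order_def)

lemma distinguished_of_order_factors:
  assumes "distinguished_of_order (Fil 1) n (G * H)"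
  obtains i j where "n = i + j" "distinguished_of_order (Fil 1) i G" "distinguished_of_order (Fil 1) j H"
proof -
  obtain c where low: "\<forall>m<n. (G * H) $ m \<in> Fil 1" and lead: "(G * H) $ n * c - 1 \<in> Fil 1"
    using assms by (auto simp: distinguished_of_order_def)
  have GHn: "(G * H) $ n \<notin> Fil 1"
    using distinguished_of_order_coeff_notin_Fil1[OF assms] .
  have "G \<notin> fps_Fil 1" "H \<notin> fps_Fil 1"
    using GHn fps_Fil_mult_left fps_Fil_mult_right fps_FilD by blast+
  then obtain i j where Gi: "G $ i \<notin> Fil 1" "\<forall>m<i. G $ m \<in> Fil 1"
    and Hj: "H $ j \<notin> Fil 1" "\<forall>m<j. H $ m \<in> Fil 1"
    using least_coeff_notin_Fil1 by (metis fps_FilI)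
  have near: "(G * H) $ (i + j) - G $ i * H $ j \<in> Fil 1"
    by (rule fps_mult_low_coeffs_in_Fil1(2)[OF Gi(2) Hj(2)])
  have "G $ i * H $ j \<notin> Fil 1"
    using Gi Hj Fil1_prime by blast
  then have "(G * H) $ (i + j) \<notin> Fil 1"
    using ideal_diff[OF is_ideal_Fil _ near] by force
  then have n: "n = i + j"
    using low GHn fps_mult_low_coeffs_in_Fil1(1)[OF Gi(2) Hj(2)] by (metis linorder_neqE_nat)
  have "((G * H) $ n * c - 1) - ((G * H) $ (i + j) - G $ i * H $ j) * c \<in> Fil 1"
    by (rule ideal_diff[OF is_ideal_Fil lead ideal_mult_right[OF is_ideal_Fil near]])
  moreover have "((G * H) $ n * c - 1) - ((G * H) $ (i + j) - G $ i * H $ j) * c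
      = G $ i * H $ j * c - 1"
    by (simp add: n algebra_simps)
  ultimately have "G $ i * H $ j * c - 1 \<in> Fil 1"
    by simp
  then have "distinguished_of_order (Fil 1) i G" "distinguished_of_order (Fil 1) j H"
    using Gi Hj unfolding distinguished_of_order_def by (metis mult.assoc mult.commute)+
  with n that show ?thesis by blast
qed

lemma weierstrass_poly_mult:
  assumes "distinguished_of_order (Fil 1) i G" "distinguished_of_order (Fil 1) j H"
  shows "Wpoly (G * H) = Wpoly G * Wpoly H"
proof -
  obtain UG UH where UG: "UG dvd 1" "G = UG * fps_of_poly (Wpoly G)"
    and UH: "UH dvd 1" "H = UH * fps_of_poly (Wpoly H)"
    using weierstrass_poly_of_distinguished(3) assms by metis
  have "G * H = (UG * fps_of_poly (Wpoly G)) * (UH * fps_of_poly (Wpoly H))"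
    using UG(2) UH(2) by (rule arg_cong2[where f = "(*)"])
  then have "G * H = (UG * UH) * fps_of_poly (Wpoly G * Wpoly H)"
    by (simp add: fps_of_poly_mult mult_ac)
  moreover have "UG * UH dvd 1"
    using mult_dvd_mono[OF UG(1) UH(1)] by simp
  moreover have "is_weierstrass_poly (Wpoly G * Wpoly H)"
    using assms by (intro is_weierstrass_poly_mult weierstrass_poly_of_distinguished(1))
  ultimately show ?thesis
    by (intro weierstrass_poly_eqI)
qed

subsection \<open>The isomorphism of quotients by \<open>f\<^sub>0\<close>\<close>

lemma quot_iso_image_surj:
  assumes "quot_R_alg_iso \<iota> f0 \<psi>"
  shows "\<exists>r s. y = \<iota> r + \<iota> f0 * s"
proof -
  have img: "\<psi> ` range (coset (principal f0)) = range (coset (principal (\<iota> f0)))"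
    and \<psi>: "\<And>r. \<psi> (coset (principal f0) r) = coset (principal (\<iota> f0)) (\<iota> r)"
    using assms unfolding quot_R_alg_iso_def bij_betw_def by blast+
  have "coset (principal (\<iota> f0)) y \<in> \<psi> ` range (coset (principal f0))"
    unfolding img by (rule rangeI)
  then obtain r where "coset (principal (\<iota> f0)) y = coset (principal (\<iota> f0)) (\<iota> r)"
    using \<psi> by auto
  then obtain s where "y - \<iota> r = \<iota> f0 * s"
    by (auto simp: coset_principal_eq_iff dvd_def)
  then show ?thesis
    by (metis add_diff_cancel_left' diff_add_cancel)
qed

lemma quot_iso_dvd_of_image_dvd:
  assumes "quot_R_alg_iso \<iota> f0 \<psi>" "\<iota> f0 dvd \<iota> c"
  shows "f0 dvd c"
proof -
  have inj: "inj_on \<psi> (range (coset (principal f0)))"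
    and \<psi>: "\<And>r. \<psi> (coset (principal f0) r) = coset (principal (\<iota> f0)) (\<iota> r)"
    using assms unfolding quot_R_alg_iso_def bij_betw_def by blast+
  have "\<psi> (coset (principal f0) c) = \<psi> (coset (principal f0) 0)"
    using assms(2) by (simp add: \<psi> coset_principal_eq_iff)
  then have "coset (principal f0) c = coset (principal f0) 0"
    using inj by (auto dest: inj_onD)
  then show ?thesis
    by (simp add: coset_principal_eq_iff)
qed

lemma quot_iso_divisor_dvd:
  assumes q: "quot_R_alg_iso \<iota> f0 \<psi>" and e: "e dvd f0" and c: "\<iota> e dvd \<iota> c"
  shows "e dvd c"
proof -
  obtain w where w: "\<iota> c = \<iota> e * w" using c by (rule dvdE)
  obtain r s where "w = \<iota> r + \<iota> f0 * s" using quot_iso_image_surj[OF q] by blast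
  then have "\<iota> (c - e * r) = \<iota> f0 * (\<iota> e * s)"
    using w by (simp add: iota_diff iota_mult algebra_simps)
  then have "f0 dvd c - e * r"
    by (intro quot_iso_dvd_of_image_dvd[OF q]) simp
  then have "e dvd (c - e * r) + e * r"
    using e dvd_trans by (intro dvd_add) auto
  then show ?thesis by simp
qed

lemma quot_iso_divisor_dvd_1:
  assumes q: "quot_R_alg_iso \<iota> f0 \<psi>" and e: "e dvd f0" and "\<iota> e dvd 1"
  shows "e dvd 1"
proof -
  have "\<iota> e dvd \<iota> 1" using assms(3) by simp
  then show ?thesis by (rule quot_iso_divisor_dvd[OF q e])
qed

text \<open>The coefficients of the cofactor are found one at a time, each by dividing by
  \<open>g\<^sub>0\<close> in \<open>R\<close>, which is possible since \<open>\<iota>\<close> reflects divisibility by divisors of \<open>f\<^sub>0\<close>.\<close>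
lemma cofactor_coeff_in_range:
  assumes q: "quot_R_alg_iso \<iota> (f $ 0) \<psi>" and g0: "g $ 0 dvd f $ 0" "\<iota> (g $ 0) \<noteq> 0"
    and fac: "fps_map \<iota> g * Q = fps_map \<iota> f"
  shows "Q $ m \<in> range \<iota>"
proof (induct m rule: less_induct)
  case (less m)
  define c where "c = (\<Sum>a = Suc 0..m. g $ a * inv \<iota> (Q $ (m - a)))"
  have "\<iota> (f $ m) = (fps_map \<iota> g * Q) $ m"
    using fac by (metis fps_map_nth)
  also have "\<dots> = (\<Sum>a = 0..m. \<iota> (g $ a) * Q $ (m - a))"
    by (simp add: fps_mult_nth)
  also have "\<dots> = \<iota> (g $ 0) * Q $ m + (\<Sum>a = Suc 0..m. \<iota> (g $ a * inv \<iota> (Q $ (m - a))))"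
    using less by (auto simp: sum.atLeast_Suc_atMost iota_mult f_inv_into_f intro!: sum.cong)
  finally have "\<iota> (f $ m - c) = \<iota> (g $ 0) * Q $ m"
    by (simp add: c_def iota_diff iota_sum)
  moreover from this have "g $ 0 dvd f $ m - c"
    by (intro quot_iso_divisor_dvd[OF q g0(1)]) simp
  then obtain t where "f $ m - c = g $ 0 * t" by (rule dvdE)
  ultimately have "Q $ m = \<iota> t"
    using g0(2) by (simp add: iota_mult)
  then show ?case by simp
qed

lemma fps_map_cofactor_descends:
  assumes q: "quot_R_alg_iso \<iota> (f $ 0) \<psi>" and inj: "inj \<iota>"
    and fac: "fps_map \<iota> g * Q = fps_map \<iota> f" and g0: "g $ 0 dvd f $ 0"
  shows "\<exists>h. f = g * h \<and> fps_map \<iota> h = Q"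
proof -
  have "Q $ m \<in> range \<iota>" for m
  proof (cases "f $ 0 = 0")
    case True
    then show ?thesis
      using quot_iso_image_surj[OF q, of "Q $ m"] by auto
  next
    case False
    then have "\<iota> (g $ 0) \<noteq> 0"
      using g0 inj iota_0 by (metis dvd_0_left_iff injD)
    then show ?thesis
      using cofactor_coeff_in_range[OF q g0 _ fac] by blast
  qed
  then have "fps_map \<iota> (Abs_fps (\<lambda>m. inv \<iota> (Q $ m))) = Q"
    by (intro fps_ext) (simp add: f_inv_into_f)
  moreover from this have "f = g * Abs_fps (\<lambda>m. inv \<iota> (Q $ m))"
    using fac by (intro fps_map_inj[OF inj]) (simp add: fps_map_mult)
  ultimately show ?thesis by blast
qed

text \<open>Subtract from \<open>G\<close> a multiple of \<open>f\<close> that moves all coefficients into \<open>\<iota> ` R\<close>; as \<open>G\<close>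
  divides \<open>f\<close>, the result is still a unit multiple of \<open>G\<close>.\<close>
lemma lift_weierstrass_factor:
  assumes q: "quot_R_alg_iso \<iota> (f $ 0) \<psi>"
    and F: "fps_map \<iota> f = Uf * fps_of_poly (G * H)"
    and G0: "coeff G 0 = \<iota> e * w" and w: "w * w' = 1"
  shows "\<exists>g M. g $ 0 = e \<and> M dvd 1 \<and> fps_map \<iota> g = M * fps_of_poly G"
proof -
  define Gw where "Gw = fps_of_poly G * fps_const w'"
  have Gw0: "Gw $ 0 = \<iota> e"
    using G0 w by (simp add: Gw_def mult.assoc)
  have "\<exists>r s. y = \<iota> r + fps_map \<iota> f $ 0 * s" for y
    using quot_iso_image_surj[OF q] by simp
  then obtain k S where kS: "fps_shift 1 Gw = fps_map \<iota> k + fps_map \<iota> f * S"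
    using fps_eq_fps_map_plus_mult by blast
  define g where "g = fps_const e + fps_X * k"
  have "fps_map \<iota> g = fps_const (\<iota> e) + fps_X * fps_map \<iota> k"
    by (rule fps_ext) (simp add: g_def)
  also have "fps_const (\<iota> e) = Gw - fps_X * fps_shift 1 Gw"
    using fps_shift_eq_const_plus_fps_X_mult[of 0 Gw, folded One_nat_def] Gw0
    by (metis add_diff_cancel_right' fps_shift_0)
  finally have "fps_map \<iota> g = Gw - fps_X * fps_map \<iota> f * S"
    by (simp add: kS algebra_simps)
  moreover have "fps_map \<iota> f = Gw * (Uf * fps_const w * fps_of_poly H)"
    using w by (simp add: F Gw_def fps_of_poly_mult mult_ac flip: fps_const_mult)
  ultimately have "fps_map \<iota> g = Gw * (1 - fps_X * Uf * fps_const w * fps_of_poly H * S)"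
    by (simp add: algebra_simps)
  moreover have "(1 - fps_X * Uf * fps_const w * fps_of_poly H * S) dvd 1"
    by (simp add: fps_dvd_1_iff)
  moreover have "fps_const w' dvd 1"
    using w by (simp add: fps_dvd_1_iff) (metis dvdI mult.commute)
  ultimately show ?thesis
    by (intro exI[of _ g] exI[of _ "fps_const w' * (1 - fps_X * Uf * fps_const w * fps_of_poly H * S)"])
      (auto simp: g_def Gw_def mult_ac intro: mult_dvd_mono[where b = 1 and d = 1, simplified])
qed

lemma not_dvd_1_if_weierstrass_factor:
  assumes x: "fps_map \<iota> x = U * fps_of_poly Q" and Q: "is_weierstrass_poly Q" "degree Q \<noteq> 0"
  shows "\<not> x dvd 1"
proof
  assume "x dvd 1"
  then have "\<iota> (x $ 0) \<notin> Fil 1"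
    by (simp add: fps_dvd_1_iff iota_dvd_1 dvd_1_notin_Fil1)
  moreover have "\<iota> (x $ 0) = U $ 0 * coeff Q 0"
    using arg_cong[OF x, of "\<lambda>F. F $ 0"] by simp
  ultimately show False
    using Q by (simp add: is_weierstrass_poly_def ideal_mult_left[OF is_ideal_Fil])
qed

end

section \<open>Factorisations of \<open>f\<close> and of \<open>P\<^sub>f\<close>\<close>

locale weierstrass_irreducibility = padic_completion P \<iota> \<phi>
  for P :: "'a::idom set" and \<iota> :: "'a \<Rightarrow> 'b::idom" and \<phi> +
  fixes f :: "'a fps" and \<psi> :: "'a set \<Rightarrow> 'b set" and n :: nat
  assumes inj: "inj \<iota>"
    and f_distinguished: "distinguished_of_order (Fil 1) n (fps_map \<iota> f)"
    and quot_iso: "quot_R_alg_iso \<iota> (f $ 0) \<psi>"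
    and divisors: "\<forall>d. d dvd \<iota> (f $ 0) \<longrightarrow> (\<exists>e. e dvd f $ 0 \<and> d dvd \<iota> e \<and> \<iota> e dvd d)"
begin

lemma Wpoly_f: "is_weierstrass_poly (Wpoly (fps_map \<iota> f))" "degree (Wpoly (fps_map \<iota> f)) = n"
  "\<exists>U. U dvd 1 \<and> fps_map \<iota> f = U * fps_of_poly (Wpoly (fps_map \<iota> f))"
  by (rule weierstrass_poly_of_distinguished[OF f_distinguished])+

lemma Wpoly_f_dvd_1_iff: "Wpoly (fps_map \<iota> f) dvd 1 \<longleftrightarrow> n = 0"
  using is_weierstrass_poly_dvd_1_iff[OF Wpoly_f(1)] Wpoly_f(2) by simp

lemma dvd_1_if_divisor_of_order_0:
  assumes "g $ 0 dvd f $ 0" "distinguished_of_order (Fil 1) 0 (fps_map \<iota> g)"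
  shows "g dvd 1"
proof -
  have "\<iota> (g $ 0) dvd 1"
    using assms(2) dvd_1_if_mult_minus_1_in_Fil1 by (auto simp: distinguished_of_order_def)
  then show ?thesis
    using quot_iso_divisor_dvd_1[OF quot_iso assms(1)] by (simp add: fps_dvd_1_iff)
qed

lemma f_dvd_1_iff: "f dvd 1 \<longleftrightarrow> n = 0"
proof
  assume "f dvd 1"
  then have "\<iota> (f $ 0) \<notin> Fil 1"
    by (simp add: fps_dvd_1_iff iota_dvd_1 dvd_1_notin_Fil1)
  then show "n = 0"
    using f_distinguished by (auto simp: distinguished_of_order_def)
qed (use f_distinguished dvd_1_if_divisor_of_order_0 in auto)

lemma f_nonzero: "f \<noteq> 0"
  using distinguished_of_order_coeff_notin_Fil1[OF f_distinguished] ideal_zero[OF is_ideal_Fil]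
  by auto

lemma factorization_to_weierstrass:
  assumes fgh: "f = g * h" and g: "\<not> g dvd 1" and h: "\<not> h dvd 1"
  shows "distinguished (Fil 1) (fps_map \<iota> g) \<and> distinguished (Fil 1) (fps_map \<iota> h) \<and>
    Wpoly (fps_map \<iota> f) = Wpoly (fps_map \<iota> g) * Wpoly (fps_map \<iota> h) \<and>
    \<not> Wpoly (fps_map \<iota> g) dvd 1 \<and> \<not> Wpoly (fps_map \<iota> h) dvd 1"
proof -
  obtain i j where ij: "distinguished_of_order (Fil 1) i (fps_map \<iota> g)"
      "distinguished_of_order (Fil 1) j (fps_map \<iota> h)"
    using f_distinguished distinguished_of_order_factors by (metis fgh fps_map_mult)
  have "g $ 0 dvd f $ 0" "h $ 0 dvd f $ 0"
    by (simp_all add: fgh)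
  then have "i \<noteq> 0" "j \<noteq> 0"
    using dvd_1_if_divisor_of_order_0 ij g h by metis+
  then have "\<not> Wpoly (fps_map \<iota> g) dvd 1" "\<not> Wpoly (fps_map \<iota> h) dvd 1"
    using ij by (simp_all add: is_weierstrass_poly_dvd_1_iff weierstrass_poly_of_distinguished)
  with ij show ?thesis
    by (auto simp: fgh fps_map_mult distinguished_def intro: weierstrass_poly_mult)
qed

lemma lift_monic_weierstrass_factorization:
  assumes GH: "Wpoly (fps_map \<iota> f) = G * H"
    and G: "is_weierstrass_poly G" "degree G \<noteq> 0" and H: "is_weierstrass_poly H" "degree H \<noteq> 0"
  shows "\<exists>g h. f = g * h \<and> \<not> g dvd 1 \<and> \<not> h dvd 1 \<and> Wpoly (fps_map \<iota> g) = G \<and>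
    Wpoly (fps_map \<iota> h) = H"
proof -
  obtain Uf where Uf: "Uf dvd 1" and F: "fps_map \<iota> f = Uf * fps_of_poly (G * H)"
    using Wpoly_f(3) GH by metis
  have "\<iota> (f $ 0) = Uf $ 0 * (coeff G 0 * coeff H 0)"
    using arg_cong[OF F, of "\<lambda>F. F $ 0"] by (simp add: coeff_mult_0)
  then obtain e where e: "e dvd f $ 0" "coeff G 0 dvd \<iota> e" "\<iota> e dvd coeff G 0"
    using divisors by (metis dvd_mult dvd_triv_left)
  then obtain w w' where w: "coeff G 0 = \<iota> e * w" "w * w' = 1"
    by (metis associated_imp_unit_multiple dvdE)
  obtain g M where g: "g $ 0 = e" "M dvd 1" "fps_map \<iota> g = M * fps_of_poly G"
    using lift_weierstrass_factor[OF quot_iso F w] by blast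
  obtain M' where M': "M * M' = 1" using g(2) by (metis dvdE)
  have "fps_map \<iota> g * (M' * Uf * fps_of_poly H) = fps_map \<iota> f"
    using M' by (simp add: g(3) F fps_of_poly_mult mult_ac)
  then obtain h where h: "f = g * h" "fps_map \<iota> h = (M' * Uf) * fps_of_poly H"
    using fps_map_cofactor_descends[OF quot_iso inj] e(1) g(1) by (metis mult.assoc)
  have "M' * Uf dvd 1"
    using M' Uf by (metis dvdI mult.commute mult_dvd_mono mult_1)
  then have "Wpoly (fps_map \<iota> h) = H" "Wpoly (fps_map \<iota> g) = G"
    using weierstrass_poly_eqI h(2) H(1) g(2,3) G(1) by blast+
  moreover have "\<not> g dvd 1" "\<not> h dvd 1"
    using not_dvd_1_if_weierstrass_factor g(3) G h(2) H by blast+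
  ultimately show ?thesis
    using h(1) by blast
qed

lemma weierstrass_factorization_lifts:
  assumes GH: "Wpoly (fps_map \<iota> f) = G * H" and G: "\<not> G dvd 1" and H: "\<not> H dvd 1"
  shows "\<exists>g h. f = g * h \<and> \<not> g dvd 1 \<and> \<not> h dvd 1 \<and>
    (\<exists>!u. u dvd 1 \<and> (\<exists>v. u * v = 1 \<and>
       G = smult u (Wpoly (fps_map \<iota> g)) \<and> H = smult v (Wpoly (fps_map \<iota> h))))"
proof -
  define u v where "u = lead_coeff G" and "v = lead_coeff H"
  note normalize = is_weierstrass_poly_normalize_factors[OF Wpoly_f(1)[unfolded GH], folded u_def v_def]
  have uv: "u * v = 1" "v * u = 1"
    using normalize(1) mult.commute[of v u] by simp_all
  have "u dvd 1" "v dvd 1"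
    using dvdI[OF uv(1)[symmetric]] dvdI[OF uv(2)[symmetric]] .
  have "u \<noteq> 0" "v \<noteq> 0"
    using uv by auto
  then have "degree (smult v G) \<noteq> 0" "degree (smult u H) \<noteq> 0"
    using degree_neq_0_if_not_dvd_1[OF \<open>u dvd 1\<close>[unfolded u_def] G]
      degree_neq_0_if_not_dvd_1[OF \<open>v dvd 1\<close>[unfolded v_def] H]
    by simp_all
  moreover have "Wpoly (fps_map \<iota> f) = smult v G * smult u H"
    using GH normalize(4) by simp
  ultimately obtain g h where gh: "f = g * h" "\<not> g dvd 1" "\<not> h dvd 1"
      "Wpoly (fps_map \<iota> g) = smult v G" "Wpoly (fps_map \<iota> h) = smult u H"
    using lift_monic_weierstrass_factorization[of "smult v G" "smult u H"] normalize(2,3) by blast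
  have "G = smult u (smult v G)" "H = smult v (smult u H)"
    using uv by simp_all
  moreover have "u' = u" if "G = smult u' (smult v G)" for u'
  proof -
    have "lead_coeff G = u' * (v * lead_coeff G)"
      using arg_cong[OF that, of lead_coeff] by (simp only: lead_coeff_smult)
    then show "u' = u"
      using uv(2) unfolding u_def by simp
  qed
  ultimately have "\<exists>!u. u dvd 1 \<and> (\<exists>v. u * v = 1 \<and>
       G = smult u (Wpoly (fps_map \<iota> g)) \<and> H = smult v (Wpoly (fps_map \<iota> h)))"
    using uv \<open>u dvd 1\<close> gh(4,5) by (intro ex1I[of _ u]) auto
  with gh show ?thesis by blast
qed

lemma irreducible_iff_Wpoly_irreducible: "irreducible f \<longleftrightarrow> irreducible (Wpoly (fps_map \<iota> f))"
proof
  assume f: "irreducible f"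
  show "irreducible (Wpoly (fps_map \<iota> f))"
  proof (rule irreducibleI)
    show "Wpoly (fps_map \<iota> f) \<noteq> 0"
      using Wpoly_f(1) by (auto simp: is_weierstrass_poly_def)
    show "\<not> Wpoly (fps_map \<iota> f) dvd 1"
      using f irreducible_not_unit Wpoly_f_dvd_1_iff f_dvd_1_iff by blast
  next
    fix G H assume "Wpoly (fps_map \<iota> f) = G * H"
    then show "G dvd 1 \<or> H dvd 1"
      using f weierstrass_factorization_lifts irreducibleD by metis
  qed
next
  assume W: "irreducible (Wpoly (fps_map \<iota> f))"
  show "irreducible f"
  proof (rule irreducibleI)
    show "f \<noteq> 0" by (rule f_nonzero)
    show "\<not> f dvd 1"
      using W irreducible_not_unit Wpoly_f_dvd_1_iff f_dvd_1_iff by blast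
  next
    fix g h assume "f = g * h"
    then show "g dvd 1 \<or> h dvd 1"
      using W factorization_to_weierstrass irreducibleD by metis
  qed
qed

end

theorem theorem7p1:
  fixes P :: "'a::idom set"
    and \<iota> :: "'a \<Rightarrow> 'b::idom"
    and \<phi> :: "'b \<Rightarrow> nat \<Rightarrow> 'a set"
    and f :: "'a fps"
  assumes prime: "is_prime_ideal P"
    and compl: "is_padic_completion P \<iota> \<phi>"
    and contains: "inj \<iota>"
    and dist: "distinguished (padic_closure \<phi> (\<iota> ` P)) (fps_map \<iota> f)"
    and quot_iso: "\<exists>\<psi>. quot_R_alg_iso \<iota> (fps_nth f 0) \<psi>"
    and divisors: "\<forall>d. d dvd \<iota> (fps_nth f 0) \<longrightarrow>
                      (\<exists>e. e dvd fps_nth f 0 \<and> d dvd \<iota> e \<and> \<iota> e dvd d)"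
  shows "(irreducible f \<longleftrightarrow>
            irreducible (weierstrass_poly (padic_closure \<phi> (\<iota> ` P)) (fps_map \<iota> f)))
    \<and> (\<forall>g h. f = g * h \<and> \<not> g dvd 1 \<and> \<not> h dvd 1 \<longrightarrow>
          distinguished (padic_closure \<phi> (\<iota> ` P)) (fps_map \<iota> g) \<and>
          distinguished (padic_closure \<phi> (\<iota> ` P)) (fps_map \<iota> h) \<and>
          weierstrass_poly (padic_closure \<phi> (\<iota> ` P)) (fps_map \<iota> f) =
            weierstrass_poly (padic_closure \<phi> (\<iota> ` P)) (fps_map \<iota> g) *
            weierstrass_poly (padic_closure \<phi> (\<iota> ` P)) (fps_map \<iota> h) \<and>
          \<not> (weierstrass_poly (padic_closure \<phi> (\<iota> ` P)) (fps_map \<iota> g)) dvd 1 \<and>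
          \<not> (weierstrass_poly (padic_closure \<phi> (\<iota> ` P)) (fps_map \<iota> h)) dvd 1)
    \<and> (\<forall>G H. weierstrass_poly (padic_closure \<phi> (\<iota> ` P)) (fps_map \<iota> f) = G * H
              \<and> \<not> G dvd 1 \<and> \<not> H dvd 1 \<longrightarrow>
          (\<exists>g h. f = g * h \<and> \<not> g dvd 1 \<and> \<not> h dvd 1 \<and>
             (\<exists>!u. u dvd 1 \<and> (\<exists>v. u * v = 1 \<and>
                 G = smult u (weierstrass_poly (padic_closure \<phi> (\<iota> ` P)) (fps_map \<iota> g)) \<and>
                 H = smult v (weierstrass_poly (padic_closure \<phi> (\<iota> ` P)) (fps_map \<iota> h))))))"
proof -
  interpret padic_completion P \<iota> \<phi>
    using prime compl by unfold_locales
  obtain \<psi> where quot: "quot_R_alg_iso \<iota> (f $ 0) \<psi>"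
    using quot_iso by blast
  obtain n where "distinguished_of_order (Fil 1) n (fps_map \<iota> f)"
    using dist by (auto simp: padic_closure_eq_Fil1 distinguished_def)
  then interpret weierstrass_irreducibility P \<iota> \<phi> f \<psi> n
    using contains quot divisors by unfold_locales
  show ?thesis
    unfolding padic_closure_eq_Fil1
    by (rule conjI[OF _ conjI]; (intro allI impI, elim conjE)?)
      (rule irreducible_iff_Wpoly_irreducible factorization_to_weierstrass
        weierstrass_factorization_lifts; assumption)+
qed

end
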